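(* Let $R$ be a principal ideal domain. Then every prime ideal of $R[X]$ is power stable.
   Context: An ideal $I$ of the polynomial ring $R[X]$ over an integral domain $R$ is called power stable if $I^t\cap R = (I\cap R)^t$ for all integers $t\geq 1$. *)

theory Defs
  imports "HOL-Algebra.Algebra"
begin

primrec ideal_pow :: "('a, 'b) ring_scheme \<Rightarrow> 'a set \<Rightarrow> nat \<Rightarrow> 'a set" where
  "ideal_pow R I 0 = carrier R"
| "ideal_pow R I (Suc n) = ideal_prod R I (ideal_pow R I n)"

text \<open>For an ideal I of R[X] (= poly_ring R), the intersection I \<inter> R, where R is identified with
  the constant polynomials via poly_of_const.\<close>
definition contr :: "('a, 'b) ring_scheme \<Rightarrow> 'a list set \<Rightarrow> 'a set" where
  "contr R I = {a \<in> carrier R. ring.poly_of_const R a \<in> I}"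

definition power_stable :: "('a, 'b) ring_scheme \<Rightarrow> 'a list set \<Rightarrow> bool" where
  "power_stable R I \<longleftrightarrow>
     (\<forall>t::nat. t \<ge> 1 \<longrightarrow> contr R (ideal_pow (poly_ring R) I t) = ideal_pow R (contr R I) t)"

end

theory Submission
  imports Defs
begin

text \<open>
  Let P be a prime ideal of R[X]. Its contraction p = P \<inter> R is a prime ideal of R, hence
  p = (\<pi>) for some \<pi>, and p^t = (\<pi>^t). The inclusion (\<pi>^t) \<subseteq> P^t \<inter> R is immediate.
  For the converse, if \<pi> = 0 then P^t \<inter> R \<subseteq> P \<inter> R = 0. If \<pi> \<noteq> 0 then (\<pi>) is maximal, so
  R/(\<pi>) is a field, and the image of P in (R/(\<pi>))[X] is principal. Lifting its generator we
  find either P \<subseteq> (\<pi>) (all coefficients of P lie in (\<pi>)) or P \<subseteq> (\<pi>, f) for a monic f \<in> P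
  of positive degree. In both cases P^t \<subseteq> (\<pi>^t, f) (with f = 0 in the first case), and a
  constant a = \<pi>^t u + f v must lie in (\<pi>^t): dividing u by the monic f shows that
  a - \<pi>^t r is a multiple of f of degree smaller than deg f, hence zero.
\<close>

section \<open>Powers of ideals\<close>

lemma (in ring) ideal_pow_is_ideal:
  assumes "ideal I R"
  shows "ideal (ideal_pow R I n) R"
  using assms by (induction n) (auto intro: ideal_prod_is_ideal oneideal)

lemma (in ring) ideal_pow_Suc_subset:
  assumes "ideal I R"
  shows "ideal_pow R I (Suc n) \<subseteq> I"
  using ideal_prod_inter[OF assms ideal_pow_is_ideal[OF assms]] by simp

lemma (in ring) nat_pow_in_ideal_pow:
  assumes "ideal I R" and "x \<in> I"
  shows "x [^] n \<in> ideal_pow R I n"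
proof (induction n)
  case 0
  then show ?case using ideal.Icarr[OF assms] by simp
next
  case (Suc n)
  have "x [^] Suc n = x \<otimes> x [^] n"
    using nat_pow_Suc2[OF ideal.Icarr[OF assms]] .
  then show ?case using ideal_prod.prod[OF assms(2) Suc] by simp
qed

lemma (in cring) cgenideal_one: "PIdl \<one> = carrier R"
  unfolding cgenideal_def by force

lemma (in cring) ideal_pow_cgenideal:
  assumes a: "a \<in> carrier R"
  shows "ideal_pow R (PIdl a) n = PIdl (a [^] n)"
proof (induction n)
  case 0
  then show ?case using cgenideal_one by simp
next
  case (Suc n)
  have an: "a [^] n \<in> carrier R" and c: "a \<otimes> a [^] n \<in> carrier R" using a by simp_all
  have "ideal_pow R (PIdl a) (Suc n) = (PIdl a) \<cdot> (PIdl (a [^] n))" using Suc by simp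
  also have "\<dots> = Idl (PIdl (a \<otimes> a [^] n))"
    using ideal_prod_eq_genideal[OF cgenideal_ideal[OF a] cgenideal_ideal[OF an]]
      cgenideal_prod[OF a an] by simp
  also have "\<dots> = PIdl (a \<otimes> a [^] n)"
  proof
    show "Idl (PIdl (a \<otimes> a [^] n)) \<subseteq> PIdl (a \<otimes> a [^] n)"
      by (rule genideal_minimal[OF cgenideal_ideal[OF c]]) simp
    show "PIdl (a \<otimes> a [^] n) \<subseteq> Idl (PIdl (a \<otimes> a [^] n))"
      by (rule genideal_self) (use ideal.Icarr[OF cgenideal_ideal[OF c]] in blast)
  qed
  also have "\<dots> = PIdl (a [^] Suc n)" by (simp only: nat_pow_Suc2[OF a])
  finally show ?case .
qed

section \<open>Ideals generated by two elements\<close>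

text \<open>The set of linear combinations a u + f v; in a commutative ring this is the ideal (a, f).\<close>

definition (in ring) pair_ideal :: "'a \<Rightarrow> 'a \<Rightarrow> 'a set" where
  "pair_ideal a f = {a \<otimes> u \<oplus> f \<otimes> v | u v. u \<in> carrier R \<and> v \<in> carrier R}"

lemma (in cring) pair_ideal_mult:
  assumes "a \<in> carrier R" "b \<in> carrier R" "f \<in> carrier R"
    and "x \<in> pair_ideal a f" "y \<in> pair_ideal b f"
  shows "x \<otimes> y \<in> pair_ideal (a \<otimes> b) f"
proof -
  obtain u v u' v' where uv: "u \<in> carrier R" "v \<in> carrier R" "u' \<in> carrier R" "v' \<in> carrier R"
    "x = a \<otimes> u \<oplus> f \<otimes> v" "y = b \<otimes> u' \<oplus> f \<otimes> v'"
    using assms(4,5) unfolding pair_ideal_def by auto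
  have "x \<otimes> y = (a \<otimes> b) \<otimes> (u \<otimes> u') \<oplus> f \<otimes> (v \<otimes> (b \<otimes> u' \<oplus> f \<otimes> v') \<oplus> a \<otimes> u \<otimes> v')"
    using uv assms(1-3) by (simp add: l_distr r_distr m_ac a_ac)
  then show ?thesis using uv assms(1-3) unfolding pair_ideal_def by blast
qed

lemma (in cring) pair_ideal_add:
  assumes "a \<in> carrier R" "f \<in> carrier R" "x \<in> pair_ideal a f" "y \<in> pair_ideal a f"
  shows "x \<oplus> y \<in> pair_ideal a f"
proof -
  obtain u v u' v' where uv: "u \<in> carrier R" "v \<in> carrier R" "u' \<in> carrier R" "v' \<in> carrier R"
    "x = a \<otimes> u \<oplus> f \<otimes> v" "y = a \<otimes> u' \<oplus> f \<otimes> v'"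
    using assms(3,4) unfolding pair_ideal_def by auto
  have "x \<oplus> y = a \<otimes> (u \<oplus> u') \<oplus> f \<otimes> (v \<oplus> v')"
    using uv assms(1,2) by (simp add: r_distr a_ac)
  then show ?thesis using uv assms(1,2) unfolding pair_ideal_def by blast
qed

lemma (in cring) ideal_pow_subset_pair_ideal:
  assumes "a \<in> carrier R" "f \<in> carrier R" "I \<subseteq> pair_ideal a f"
  shows "ideal_pow R I n \<subseteq> pair_ideal (a [^] n) f"
proof (induction n)
  case 0
  have "x \<in> pair_ideal \<one> f" if "x \<in> carrier R" for x
  proof -
    have "x = \<one> \<otimes> x \<oplus> f \<otimes> \<zero>" using that assms(2) by simp
    then show ?thesis unfolding pair_ideal_def using that by blast
  qed
  then show ?case by auto
next
  case (Suc n)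
  show ?case
  proof
    fix x assume "x \<in> ideal_pow R I (Suc n)"
    then have "x \<in> I \<cdot> ideal_pow R I n" by simp
    then show "x \<in> pair_ideal (a [^] Suc n) f"
    proof (induction rule: ideal_prod.induct)
      case (prod i j)
      have "a [^] Suc n = a \<otimes> a [^] n" using nat_pow_Suc2[OF assms(1)] .
      then show ?case using pair_ideal_mult[of a "a [^] n" f i j] assms Suc prod by auto
    next
      case (sum s1 s2)
      then show ?case using pair_ideal_add assms by auto
    qed
  qed
qed

section \<open>Polynomials over a domain\<close>

context domain
begin

text \<open>Basic facts on R[X], represented as lists of coefficients (leading coefficient first).\<close>

lemma poly_ring_domain: "domain (poly_ring R)"
  by (rule univ_poly_is_domain[OF carrier_is_subring])

lemma poly_ring_carrier_iff: "p \<in> carrier (poly_ring R) \<longleftrightarrow> polynomial (carrier R) p"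
  by (rule univ_poly_carrier[symmetric])

lemma poly_ring_coeffs_in_carrier: "p \<in> carrier (poly_ring R) \<Longrightarrow> set p \<subseteq> carrier R"
  unfolding poly_ring_carrier_iff by (rule polynomial_incl)

lemma poly_of_const_ring_hom: "ring_hom_ring R (poly_ring R) poly_of_const"
  using canonical_embedding_ring_hom[OF carrier_is_subring] by simp

lemma poly_of_const_closed: "a \<in> carrier R \<Longrightarrow> poly_of_const a \<in> carrier (poly_ring R)"
  by (rule ring_hom_closed[OF ring_hom_ring.homh[OF poly_of_const_ring_hom]])

lemma const_term_poly_of_const:
  assumes "a \<in> carrier R"
  shows "const_term (poly_of_const a) = a"
proof (cases "a = \<zero>")
  case True
  then show ?thesis by (simp add: poly_of_const_def const_term_def)
next
  case False
  then have "poly_of_const a = [] @ [a]" by (simp add: poly_of_const_def)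
  then show ?thesis using const_term_eq_last[of "[]" a] assms by simp
qed

lemma degree_poly_of_const: "degree (poly_of_const a) = 0"
  by (cases "a = \<zero>") (simp_all add: poly_of_const_def)

lemma coeff_poly_of_const_mult:
  assumes "c \<in> carrier R" "g \<in> carrier (poly_ring R)"
  shows "coeff (poly_of_const c \<otimes>\<^bsub>poly_ring R\<^esub> g) i = c \<otimes> coeff g i"
proof (cases "c = \<zero>")
  case True
  then show ?thesis
    using assms poly_ring_coeffs_in_carrier[OF assms(2)]
    by (simp add: poly_of_const_def univ_poly_mult)
next
  case False
  have "poly_of_const c \<otimes>\<^bsub>poly_ring R\<^esub> g = normalize (map (\<lambda>b. c \<otimes> b) g)"
    using False poly_mult_const'(1)[OF poly_ring_coeffs_in_carrier[OF assms(2)] assms(1)]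
    by (simp add: poly_of_const_def univ_poly_mult)
  then show ?thesis using scalar_coeff[OF assms(1)] normalize_coeff by metis
qed

lemma const_multiple_in_cgenideal:
  assumes a: "a \<in> carrier R" and b: "b \<in> carrier R" and u: "u \<in> carrier (poly_ring R)"
    and eq: "poly_of_const a = poly_of_const b \<otimes>\<^bsub>poly_ring R\<^esub> u"
  shows "a \<in> PIdl b"
proof -
  have u0: "const_term u \<in> carrier R"
    using const_term_simprules_shell(1)[OF carrier_is_subring u] .
  have "a = const_term (poly_of_const b \<otimes>\<^bsub>poly_ring R\<^esub> u)"
    using eq const_term_poly_of_const[OF a] by simp
  also have "\<dots> = const_term u \<otimes> b"
    using const_term_simprules_shell(2)[OF carrier_is_subring poly_of_const_closed[OF b] u]
      const_term_poly_of_const[OF b] u0 b m_comm by simp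
  finally show ?thesis using u0 unfolding cgenideal_def by blast
qed

lemma coeff_poly_ring_minus:
  assumes f: "f \<in> carrier (poly_ring R)" and g: "g \<in> carrier (poly_ring R)"
  shows "coeff (f \<ominus>\<^bsub>poly_ring R\<^esub> g) i = coeff f i \<ominus> coeff g i"
proof -
  have neg: "coeff (map (\<lambda>b. \<ominus> b) p) i = \<ominus> coeff p i" for p
    by (induction p) auto
  have "set (map (\<lambda>b. \<ominus> b) g) \<subseteq> carrier R"
    using poly_ring_coeffs_in_carrier[OF g] by auto
  then have "coeff (poly_add f (map (\<lambda>b. \<ominus> b) g)) i = coeff f i \<oplus> \<ominus> coeff g i"
    by (simp only: poly_add_coeff[OF poly_ring_coeffs_in_carrier[OF f]] neg)
  moreover have "f \<ominus>\<^bsub>poly_ring R\<^esub> g = poly_add f (map (\<lambda>b. \<ominus> b) g)"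
    unfolding a_minus_def univ_poly_a_inv_def'[OF carrier_is_subring g] by (simp add: univ_poly_add)
  ultimately show ?thesis by (simp only: minus_eq)
qed

lemma all_coeffs_in_iff:
  assumes "\<zero> \<in> M"
  shows "(\<forall>i. coeff g i \<in> M) \<longleftrightarrow> set g \<subseteq> M"
proof
  assume "\<forall>i. coeff g i \<in> M"
  then show "set g \<subseteq> M" using coeff_img_restrict[of g] by (metis image_subsetI)
next
  assume g: "set g \<subseteq> M"
  show "\<forall>i. coeff g i \<in> M"
  proof
    fix i
    show "coeff g i \<in> M"
    proof (cases "i < length g")
      case True
      then show ?thesis using coeff_img_restrict[of g] g by auto
    next
      case False
      then show ?thesis using coeff_length assms by simp
    qed
  qed
qed

lemma coeff_map_rev_upt:
  "coeff (map F (rev [0..<n])) i = (if i < n then F i else \<zero>)"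
proof (cases "i < n")
  case True
  then have "coeff (map F (rev [0..<n])) i = map F (rev [0..<n]) ! (n - 1 - i)"
    by (subst coeff_nth) auto
  also have "\<dots> = F i" using True by (simp add: rev_nth)
  finally show ?thesis using True by simp
next
  case False
  then show ?thesis using coeff_length[of "map F (rev [0..<n])" i] by simp
qed

lemma divisible_by_const:
  assumes pi: "\<pi> \<in> carrier R" and g: "g \<in> carrier (poly_ring R)" and coeffs: "set g \<subseteq> PIdl \<pi>"
  obtains h where "h \<in> carrier (poly_ring R)" "g = poly_of_const \<pi> \<otimes>\<^bsub>poly_ring R\<^esub> h"
proof (cases "g = []")
  case True
  have "poly_of_const \<pi> \<otimes>\<^bsub>poly_ring R\<^esub> [] = []"
    using poly_mult_zero(2)[OF poly_ring_coeffs_in_carrier[OF poly_of_const_closed[OF pi]]]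
    by (simp add: univ_poly_mult)
  then show ?thesis using that True univ_poly_zero_closed by metis
next
  case False
  define k where "k = (\<lambda>x. SOME k. k \<in> carrier R \<and> x = k \<otimes> \<pi>)"
  have k: "k x \<in> carrier R \<and> x = k x \<otimes> \<pi>" if "x \<in> set g" for x
  proof -
    have "\<exists>k. k \<in> carrier R \<and> x = k \<otimes> \<pi>" using coeffs that unfolding cgenideal_def by auto
    then show ?thesis unfolding k_def by (rule someI_ex)
  qed
  define h where "h = map k g"
  have lead: "lead_coeff g \<noteq> \<zero>" "hd g \<in> set g"
    using g False by (auto simp: poly_ring_carrier_iff polynomial_def)
  have pi0: "\<pi> \<noteq> \<zero>" using k[OF lead(2)] lead(1) by auto
  have "k (hd g) \<noteq> \<zero>" using k[OF lead(2)] lead(1) pi by (metis l_null)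
  then have h_poly: "polynomial (carrier R) h"
    unfolding polynomial_def h_def using k False by (auto simp: hd_map)
  have "poly_of_const \<pi> = [\<pi>]" using pi0 by (simp add: poly_of_const_def)
  then have "poly_of_const \<pi> \<otimes>\<^bsub>poly_ring R\<^esub> h = map (\<lambda>b. \<pi> \<otimes> b) h"
    using poly_mult_const(1)[OF carrier_is_subring h_poly] pi0 pi by (simp add: univ_poly_mult)
  also have "\<dots> = g"
    unfolding h_def map_map
  proof (rule map_idI)
    fix x assume "x \<in> set g"
    then show "((\<otimes>) \<pi> \<circ> k) x = x" using k[of x] pi m_comm by (metis comp_apply)
  qed
  finally have "g = poly_of_const \<pi> \<otimes>\<^bsub>poly_ring R\<^esub> h" ..
  with h_poly show ?thesis using that poly_ring_carrier_iff by blast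
qed

lemma monic_division:
  assumes f: "f \<in> carrier (poly_ring R)" "f \<noteq> []" "lead_coeff f = \<one>"
    and h: "h \<in> carrier (poly_ring R)"
  obtains q r where "q \<in> carrier (poly_ring R)" "r \<in> carrier (poly_ring R)"
    "h = (f \<otimes>\<^bsub>poly_ring R\<^esub> q) \<oplus>\<^bsub>poly_ring R\<^esub> r" "r = [] \<or> degree r < degree f"
proof -
  have "lead_coeff f \<in> Units (R\<lparr>carrier := carrier R\<rparr>)" using f(3) by simp
  then show ?thesis
    using long_division_theorem[OF carrier_is_subring h[unfolded poly_ring_carrier_iff]
        f(1)[unfolded poly_ring_carrier_iff] f(2)] that
    unfolding poly_ring_carrier_iff by blast
qed

lemma multiple_of_smaller_degree:
  assumes f: "f \<in> carrier (poly_ring R)" "f \<noteq> []" and w: "w \<in> carrier (poly_ring R)"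
    and deg: "degree (f \<otimes>\<^bsub>poly_ring R\<^esub> w) < degree f"
  shows "w = []"
proof (rule ccontr)
  assume "w \<noteq> []"
  then have "degree (f \<otimes>\<^bsub>poly_ring R\<^esub> w) = degree f + degree w"
    using poly_mult_degree_eq[OF carrier_is_subring f(1)[unfolded poly_ring_carrier_iff]
        w[unfolded poly_ring_carrier_iff]] f(2) by (simp add: univ_poly_mult)
  then show False using deg by simp
qed

text \<open>Division by a monic f of positive degree: if a constant equals b u + f v in R[X], then it
  equals b r, where r is the remainder of u modulo f, since the difference is a multiple of f
  of degree below deg f.\<close>

lemma const_combination_with_monic:
  assumes a: "a \<in> carrier R" and b: "b \<in> carrier R"
    and f: "f \<in> carrier (poly_ring R)" "lead_coeff f = \<one>" "degree f \<ge> 1"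
    and u: "u \<in> carrier (poly_ring R)" and v: "v \<in> carrier (poly_ring R)"
    and eq: "poly_of_const a = poly_of_const b \<otimes>\<^bsub>poly_ring R\<^esub> u \<oplus>\<^bsub>poly_ring R\<^esub> f \<otimes>\<^bsub>poly_ring R\<^esub> v"
  obtains r where "r \<in> carrier (poly_ring R)" "poly_of_const a = poly_of_const b \<otimes>\<^bsub>poly_ring R\<^esub> r"
proof -
  interpret UP: domain "poly_ring R" by (rule poly_ring_domain)
  have pa: "poly_of_const a \<in> carrier (poly_ring R)" using poly_of_const_closed[OF a] .
  have pb: "poly_of_const b \<in> carrier (poly_ring R)" using poly_of_const_closed[OF b] .
  have f_ne: "f \<noteq> []" using f(3) by auto
  obtain q r where q: "q \<in> carrier (poly_ring R)" and r: "r \<in> carrier (poly_ring R)"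
    and div: "u = (f \<otimes>\<^bsub>poly_ring R\<^esub> q) \<oplus>\<^bsub>poly_ring R\<^esub> r" and r_deg: "r = [] \<or> degree r < degree f"
    using monic_division[OF f(1) f_ne f(2) u] .
  define w where "w = v \<oplus>\<^bsub>poly_ring R\<^esub> poly_of_const b \<otimes>\<^bsub>poly_ring R\<^esub> q"
  define y where "y = poly_of_const b \<otimes>\<^bsub>poly_ring R\<^esub> r"
  have w_closed: "w \<in> carrier (poly_ring R)" unfolding w_def using v pb q by simp
  have y_closed: "y \<in> carrier (poly_ring R)" unfolding y_def using pb r by simp
  have a_eq: "poly_of_const a = y \<oplus>\<^bsub>poly_ring R\<^esub> f \<otimes>\<^bsub>poly_ring R\<^esub> w"
    unfolding eq div y_def w_def using pb q r f v
    by (simp add: UP.r_distr UP.l_distr UP.m_lcomm UP.a_ac)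
  then have fw: "f \<otimes>\<^bsub>poly_ring R\<^esub> w = poly_of_const a \<oplus>\<^bsub>poly_ring R\<^esub> (\<ominus>\<^bsub>poly_ring R\<^esub> y)"
    using y_closed f(1) w_closed pa
    by (simp add: UP.a_ac UP.minus_add UP.a_assoc[symmetric] UP.r_neg UP.l_neg)
  have "degree y \<le> degree r"
    using poly_mult_degree_eq[OF carrier_is_subring pb[unfolded poly_ring_carrier_iff]
        r[unfolded poly_ring_carrier_iff]] degree_poly_of_const[of b]
    unfolding y_def univ_poly_mult by (auto split: if_splits)
  then have y_deg: "degree y < degree f" using r_deg f(3) by auto
  have "degree (poly_of_const a \<oplus>\<^bsub>poly_ring R\<^esub> (\<ominus>\<^bsub>poly_ring R\<^esub> y))
          \<le> max (degree (poly_of_const a)) (degree (\<ominus>\<^bsub>poly_ring R\<^esub> y))"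
    using poly_add_degree by (simp add: univ_poly_add)
  also have "\<dots> = degree y"
    using univ_poly_a_inv_degree[OF carrier_is_subring y_closed] degree_poly_of_const by simp
  finally have "w = []"
    using multiple_of_smaller_degree[OF f(1) f_ne w_closed] fw y_deg by simp
  then have "w = \<zero>\<^bsub>poly_ring R\<^esub>" by (simp add: univ_poly_zero)
  then have "poly_of_const a = poly_of_const b \<otimes>\<^bsub>poly_ring R\<^esub> r"
    using a_eq f(1) y_closed unfolding y_def by simp
  then show ?thesis using that r by blast
qed

lemma const_in_pair_ideal:
  assumes a: "a \<in> carrier R" and b: "b \<in> carrier R"
    and f: "f \<in> carrier (poly_ring R)" "f = [] \<or> (lead_coeff f = \<one> \<and> degree f \<ge> 1)"
    and in_pair: "poly_of_const a \<in> ring.pair_ideal (poly_ring R) (poly_of_const b) f"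
  shows "a \<in> PIdl b"
proof -
  interpret UP: domain "poly_ring R" by (rule poly_ring_domain)
  obtain u v where u: "u \<in> carrier (poly_ring R)" and v: "v \<in> carrier (poly_ring R)"
    and eq: "poly_of_const a = poly_of_const b \<otimes>\<^bsub>poly_ring R\<^esub> u \<oplus>\<^bsub>poly_ring R\<^esub> f \<otimes>\<^bsub>poly_ring R\<^esub> v"
    using in_pair unfolding UP.pair_ideal_def by blast
  obtain r where "r \<in> carrier (poly_ring R)" "poly_of_const a = poly_of_const b \<otimes>\<^bsub>poly_ring R\<^esub> r"
  proof (cases "f = []")
    case True
    then have "f \<otimes>\<^bsub>poly_ring R\<^esub> v = \<zero>\<^bsub>poly_ring R\<^esub>"
      using UP.l_null[OF v] by (simp add: univ_poly_zero)
    then show ?thesis using that u eq poly_of_const_closed[OF b] by simp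
  next
    case False
    then show ?thesis using that const_combination_with_monic[OF a b f(1) _ _ u v eq] f(2) by blast
  qed
  then show ?thesis using const_multiple_in_cgenideal[OF a b] by blast
qed

definition degree_mod :: "'a set \<Rightarrow> 'a list \<Rightarrow> nat \<Rightarrow> bool" where
  "degree_mod M g n \<longleftrightarrow> coeff g n \<notin> M \<and> (\<forall>i>n. coeff g i \<in> M)"

lemma degree_mod_exists:
  assumes M0: "\<zero> \<in> M" and g: "\<not> set g \<subseteq> M"
  obtains n where "n < length g" "degree_mod M g n"
proof -
  define S where "S = {i. coeff g i \<notin> M}"
  have S_bound: "S \<subseteq> {..<length g}"
  proof
    fix i assume "i \<in> S"
    then have "coeff g i \<noteq> \<zero>" using M0 unfolding S_def by auto
    then show "i \<in> {..<length g}" using coeff_length[of g i] by (cases "i < length g") auto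
  qed
  then have fin: "finite S" by (rule finite_subset) simp
  have "S \<noteq> {}" using all_coeffs_in_iff[OF M0, of g] g unfolding S_def by blast
  then have top: "Max S \<in> S" using Max_in[OF fin] by blast
  have "\<forall>i>Max S. coeff g i \<in> M"
    using Max_ge[OF fin] unfolding S_def by (auto simp: not_le[symmetric])
  then have "degree_mod M g (Max S)" using top unfolding degree_mod_def S_def by blast
  moreover have "Max S < length g" using top S_bound by blast
  ultimately show ?thesis using that by blast
qed

lemma monic_approximation:
  assumes M: "ideal M R" and g: "g \<in> carrier (poly_ring R)" and c: "c \<in> carrier R"
    and deg: "degree_mod M g e" and inverse: "c \<otimes> coeff g e \<ominus> \<one> \<in> M"
  obtains f where "f \<in> carrier (poly_ring R)" "f \<noteq> []" "lead_coeff f = \<one>" "degree f = e"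
    "set (poly_of_const c \<otimes>\<^bsub>poly_ring R\<^esub> g \<ominus>\<^bsub>poly_ring R\<^esub> f) \<subseteq> M"
proof -
  interpret UP: domain "poly_ring R" by (rule poly_ring_domain)
  interpret M: ideal M R by (rule M)
  have g_coeff: "coeff g i \<in> carrier R" for i
    using coeff_in_carrier[OF poly_ring_coeffs_in_carrier[OF g]] .
  define F where "F = (\<lambda>i. if i = e then \<one> else c \<otimes> coeff g i)"
  define f where "f = map F (rev [0..<Suc e])"
  have f_coeff: "coeff f i = (if i < Suc e then F i else \<zero>)" for i
    unfolding f_def by (rule coeff_map_rev_upt)
  have f_ne: "f \<noteq> []" and f_lead: "lead_coeff f = \<one>" and f_deg: "degree f = e"
    unfolding f_def F_def by simp_all
  have "F i \<in> carrier R" for i unfolding F_def using c g_coeff by simp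
  then have f_closed: "f \<in> carrier (poly_ring R)"
    unfolding poly_ring_carrier_iff polynomial_def using f_lead unfolding f_def by auto
  have cg_closed: "poly_of_const c \<otimes>\<^bsub>poly_ring R\<^esub> g \<in> carrier (poly_ring R)"
    using poly_of_const_closed[OF c] g by simp
  have "coeff (poly_of_const c \<otimes>\<^bsub>poly_ring R\<^esub> g \<ominus>\<^bsub>poly_ring R\<^esub> f) i \<in> M" for i
  proof -
    have diff: "coeff (poly_of_const c \<otimes>\<^bsub>poly_ring R\<^esub> g \<ominus>\<^bsub>poly_ring R\<^esub> f) i
        = c \<otimes> coeff g i \<ominus> coeff f i"
      using coeff_poly_ring_minus[OF cg_closed f_closed] coeff_poly_of_const_mult[OF c g] by simp
    consider "e < i" | "i = e" | "i < e" by linarith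
    then show ?thesis
    proof cases
      case 1
      then have "coeff g i \<in> M" using deg unfolding degree_mod_def by blast
      then show ?thesis using diff f_coeff 1 c g_coeff M.I_l_closed by (simp add: minus_eq)
    next
      case 2
      then show ?thesis using diff f_coeff inverse unfolding F_def by simp
    next
      case 3
      then show ?thesis using diff f_coeff c g_coeff unfolding F_def by (simp add: a_minus_def r_neg)
    qed
  qed
  then have "set (poly_of_const c \<otimes>\<^bsub>poly_ring R\<^esub> g \<ominus>\<^bsub>poly_ring R\<^esub> f) \<subseteq> M"
    using all_coeffs_in_iff[OF additive_subgroup.zero_closed[OF ideal.axioms(1)[OF M]]] by blast
  then show ?thesis using that f_closed f_ne f_lead f_deg by blast
qed

lemma monic_in_ideal:
  assumes pi: "\<pi> \<in> carrier R" and P: "ideal P (poly_ring R)" and pi_P: "poly_of_const \<pi> \<in> P"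
    and g: "g \<in> P" and deg: "degree_mod (PIdl \<pi>) g e"
    and c: "c \<in> carrier R" and inverse: "c \<otimes> coeff g e \<ominus> \<one> \<in> PIdl \<pi>"
  obtains f where "f \<in> P" "f \<noteq> []" "lead_coeff f = \<one>" "degree f = e"
proof -
  interpret UP: domain "poly_ring R" by (rule poly_ring_domain)
  interpret P: ideal P "poly_ring R" by (rule P)
  have g_closed: "g \<in> carrier (poly_ring R)" using P.Icarr[OF g] .
  obtain f where f: "f \<in> carrier (poly_ring R)" "f \<noteq> []" "lead_coeff f = \<one>" "degree f = e"
    and approx: "set (poly_of_const c \<otimes>\<^bsub>poly_ring R\<^esub> g \<ominus>\<^bsub>poly_ring R\<^esub> f) \<subseteq> PIdl \<pi>"
    using monic_approximation[OF cgenideal_ideal[OF pi] g_closed c deg inverse] by blast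
  define A where "A = poly_of_const c \<otimes>\<^bsub>poly_ring R\<^esub> g"
  have A_closed: "A \<in> carrier (poly_ring R)" unfolding A_def using poly_of_const_closed[OF c] g_closed by simp
  have A_P: "A \<in> P" unfolding A_def using P.I_l_closed[OF g poly_of_const_closed[OF c]] .
  have D_closed: "A \<ominus>\<^bsub>poly_ring R\<^esub> f \<in> carrier (poly_ring R)" using A_closed f(1) by simp
  obtain h where h: "h \<in> carrier (poly_ring R)"
    and "A \<ominus>\<^bsub>poly_ring R\<^esub> f = poly_of_const \<pi> \<otimes>\<^bsub>poly_ring R\<^esub> h"
    using divisible_by_const[OF pi D_closed] approx unfolding A_def by blast
  then have D_P: "A \<ominus>\<^bsub>poly_ring R\<^esub> f \<in> P" using P.I_r_closed[OF pi_P h] by simp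
  have "f = A \<ominus>\<^bsub>poly_ring R\<^esub> (A \<ominus>\<^bsub>poly_ring R\<^esub> f)"
    unfolding a_minus_def using A_closed f(1)
    by (simp add: UP.minus_add UP.a_assoc[symmetric] UP.r_neg)
  then have "f \<in> P" using A_P D_P P.a_closed P.a_inv_closed unfolding a_minus_def by metis
  then show ?thesis using that f(2-4) by blast
qed

text \<open>Division by a monic f \<in> P of minimal degree modulo (\<pi>) shows P \<subseteq> (\<pi>, f).\<close>

lemma ideal_in_pair_ideal_of_minimal_monic:
  assumes pi: "\<pi> \<in> carrier R" and P: "ideal P (poly_ring R)"
    and f: "f \<in> P" "f \<noteq> []" "lead_coeff f = \<one>"
    and minimal: "\<And>h n. h \<in> P \<Longrightarrow> degree_mod (PIdl \<pi>) h n \<Longrightarrow> degree f \<le> n"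
  shows "P \<subseteq> ring.pair_ideal (poly_ring R) (poly_of_const \<pi>) f"
proof
  interpret UP: domain "poly_ring R" by (rule poly_ring_domain)
  interpret P: ideal P "poly_ring R" by (rule P)
  fix h assume h: "h \<in> P"
  have f_closed: "f \<in> carrier (poly_ring R)" using P.Icarr[OF f(1)] .
  obtain q r where q: "q \<in> carrier (poly_ring R)" and r: "r \<in> carrier (poly_ring R)"
    and div: "h = (f \<otimes>\<^bsub>poly_ring R\<^esub> q) \<oplus>\<^bsub>poly_ring R\<^esub> r" and r_deg: "r = [] \<or> degree r < degree f"
    using monic_division[OF f_closed f(2,3) P.Icarr[OF h]] .
  have fq_closed: "f \<otimes>\<^bsub>poly_ring R\<^esub> q \<in> carrier (poly_ring R)" using f_closed q by simp
  have "r = h \<oplus>\<^bsub>poly_ring R\<^esub> (\<ominus>\<^bsub>poly_ring R\<^esub> (f \<otimes>\<^bsub>poly_ring R\<^esub> q))"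
    using div fq_closed r by (simp add: UP.a_ac UP.minus_add UP.a_assoc[symmetric] UP.r_neg UP.l_neg)
  then have r_P: "r \<in> P" using h P.I_r_closed[OF f(1) q] P.a_closed P.a_inv_closed by simp
  have "set r \<subseteq> PIdl \<pi>"
  proof (rule ccontr)
    assume "\<not> set r \<subseteq> PIdl \<pi>"
    then obtain n where "n < length r" "degree_mod (PIdl \<pi>) r n"
      using degree_mod_exists additive_subgroup.zero_closed[OF ideal.axioms(1)[OF cgenideal_ideal[OF pi]]]
      by blast
    then show False using minimal[OF r_P] r_deg by fastforce
  qed
  then obtain u where u: "u \<in> carrier (poly_ring R)" "r = poly_of_const \<pi> \<otimes>\<^bsub>poly_ring R\<^esub> u"
    using divisible_by_const[OF pi r] by blast
  have "h = poly_of_const \<pi> \<otimes>\<^bsub>poly_ring R\<^esub> u \<oplus>\<^bsub>poly_ring R\<^esub> f \<otimes>\<^bsub>poly_ring R\<^esub> q"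
    using div u(2) fq_closed r UP.a_comm by simp
  then show "h \<in> ring.pair_ideal (poly_ring R) (poly_of_const \<pi>) f"
    unfolding UP.pair_ideal_def using u(1) q by blast
qed

text \<open>Main structural lemma: if \<pi> \<in> P, R/(\<pi>) is a field and some element of P has a
  coefficient outside (\<pi>), then P \<subseteq> (\<pi>, f) for a monic f \<in> P of positive degree
  (the lift of a generator of the image of P in (R/(\<pi>))[X]).\<close>

lemma monic_generator_mod_const:
  assumes pi: "\<pi> \<in> carrier R"
    and field: "\<And>c. c \<in> carrier R \<Longrightarrow> c \<notin> PIdl \<pi> \<Longrightarrow> \<exists>c'\<in>carrier R. c' \<otimes> c \<ominus> \<one> \<in> PIdl \<pi>"
    and P: "ideal P (poly_ring R)" and proper: "\<one>\<^bsub>poly_ring R\<^esub> \<notin> P"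
    and pi_P: "poly_of_const \<pi> \<in> P"
    and g0: "g0 \<in> P" "\<not> set g0 \<subseteq> PIdl \<pi>"
  obtains f where "f \<in> P" "lead_coeff f = \<one>" "degree f \<ge> 1"
    "P \<subseteq> ring.pair_ideal (poly_ring R) (poly_of_const \<pi>) f"
proof -
  define E where "E = {n. \<exists>g\<in>P. degree_mod (PIdl \<pi>) g n}"
  define e where "e = (LEAST n. n \<in> E)"
  have "E \<noteq> {}"
    using degree_mod_exists[OF _ g0(2)] g0(1)
      additive_subgroup.zero_closed[OF ideal.axioms(1)[OF cgenideal_ideal[OF pi]]]
    unfolding E_def by blast
  then have "e \<in> E" unfolding e_def by (meson LeastI ex_in_conv)
  then obtain g where g: "g \<in> P" "degree_mod (PIdl \<pi>) g e" unfolding E_def by blast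
  have e_min: "e \<le> n" if "h \<in> P" "degree_mod (PIdl \<pi>) h n" for h n
    unfolding e_def using that by (intro Least_le) (auto simp: E_def)
  have "coeff g e \<in> carrier R"
    using coeff_in_carrier[OF poly_ring_coeffs_in_carrier[OF ideal.Icarr[OF P g(1)]]] .
  then obtain c where c: "c \<in> carrier R" "c \<otimes> coeff g e \<ominus> \<one> \<in> PIdl \<pi>"
    using field g(2) unfolding degree_mod_def by blast
  obtain f where f: "f \<in> P" "f \<noteq> []" "lead_coeff f = \<one>" "degree f = e"
    using monic_in_ideal[OF pi P pi_P g c] .
  have "degree f \<ge> 1"
  proof (rule ccontr)
    assume "\<not> 1 \<le> degree f"
    then have "f = [\<one>]" using f(2,3) by (cases f) (auto simp: Suc_le_eq)
    then show False using f(1) proper by (simp add: univ_poly_one)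
  qed
  moreover have "P \<subseteq> ring.pair_ideal (poly_ring R) (poly_of_const \<pi>) f"
    using ideal_in_pair_ideal_of_minimal_monic[OF pi P f(1-3)] e_min f(4) by blast
  ultimately show ?thesis using that f(1,3) by blast
qed

section \<open>Contractions of powers of a prime ideal\<close>

lemma contr_primeideal:
  assumes "primeideal P (poly_ring R)"
  shows "primeideal (contr R P) R"
  unfolding contr_def by (rule ring_hom_ring.primeideal_vimage[OF poly_of_const_ring_hom is_cring assms])

lemma cgenideal_pow_subset_contr:
  assumes P: "ideal P (poly_ring R)" and pi: "\<pi> \<in> contr R P"
  shows "PIdl (\<pi> [^] t) \<subseteq> contr R (ideal_pow (poly_ring R) P t)"
proof
  interpret UP: domain "poly_ring R" by (rule poly_ring_domain)
  have pi_R: "\<pi> \<in> carrier R" and pi_P: "poly_of_const \<pi> \<in> P" using pi unfolding contr_def by auto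
  have Pt: "ideal (ideal_pow (poly_ring R) P t) (poly_ring R)" by (rule UP.ideal_pow_is_ideal[OF P])
  fix x assume "x \<in> PIdl (\<pi> [^] t)"
  then obtain k where k: "k \<in> carrier R" "x = k \<otimes> \<pi> [^] t" unfolding cgenideal_def by blast
  have "poly_of_const x = poly_of_const k \<otimes>\<^bsub>poly_ring R\<^esub> poly_of_const \<pi> [^]\<^bsub>poly_ring R\<^esub> t"
    using k pi_R ring_hom_ring.hom_nat_pow[OF poly_of_const_ring_hom pi_R]
      ring_hom_mult[OF ring_hom_ring.homh[OF poly_of_const_ring_hom], of k "\<pi> [^] t"] by simp
  moreover have "poly_of_const \<pi> [^]\<^bsub>poly_ring R\<^esub> t \<in> ideal_pow (poly_ring R) P t"
    by (rule UP.nat_pow_in_ideal_pow[OF P pi_P])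
  ultimately have "poly_of_const x \<in> ideal_pow (poly_ring R) P t"
    using ideal.I_l_closed[OF Pt _ poly_of_const_closed[OF k(1)]] by simp
  then show "x \<in> contr R (ideal_pow (poly_ring R) P t)" unfolding contr_def using k pi_R by simp
qed

end

context principal_domain
begin

text \<open>For a nonzero prime \<pi>, the quotient R/(\<pi>) is a field: every c \<notin> (\<pi>) is invertible
  modulo \<pi>.\<close>

lemma invertible_mod_prime:
  assumes pi: "\<pi> \<in> carrier R" "\<pi> \<noteq> \<zero>" and prime: "primeideal (PIdl \<pi>) R"
    and c: "c \<in> carrier R" "c \<notin> PIdl \<pi>"
  shows "\<exists>c'\<in>carrier R. c' \<otimes> c \<ominus> \<one> \<in> PIdl \<pi>"
proof -
  have "ring_irreducible \<pi>"
    using primeideal_iff_prime[of \<pi>] primeness_condition[OF pi(1)] pi prime by simp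
  then have maximal: "maximalideal (PIdl \<pi>) R" using irreducible_imp_maximalideal[OF pi(1)] by simp
  define J where "J = PIdl c <+>\<^bsub>R\<^esub> PIdl \<pi>"
  have J: "ideal J R" unfolding J_def by (rule add_ideals[OF cgenideal_ideal[OF c(1)] cgenideal_ideal[OF pi(1)]])
  have zero: "\<zero> \<in> PIdl c" "\<zero> \<in> PIdl \<pi>"
    using additive_subgroup.zero_closed[OF ideal.axioms(1)[OF cgenideal_ideal[OF c(1)]]]
      additive_subgroup.zero_closed[OF ideal.axioms(1)[OF cgenideal_ideal[OF pi(1)]]] by auto
  have "PIdl \<pi> \<subseteq> J"
  proof
    fix x assume x: "x \<in> PIdl \<pi>"
    then have "x = \<zero> \<oplus> x" using ideal.Icarr[OF cgenideal_ideal[OF pi(1)]] by simp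
    then show "x \<in> J" unfolding J_def set_add_def' using zero x by blast
  qed
  moreover have "c \<in> J"
    using c zero cgenideal_self[OF c(1)] r_zero[OF c(1)] unfolding J_def set_add_def' by force
  ultimately have "J = carrier R"
    using maximalideal.I_maximal[OF maximal J] ideal.Icarr[OF J] c(2) by blast
  then obtain x y where xy: "x \<in> PIdl c" "y \<in> PIdl \<pi>" "\<one> = x \<oplus> y"
    unfolding J_def set_add_def' using one_closed by blast
  obtain k where k: "k \<in> carrier R" "x = k \<otimes> c" using xy(1) unfolding cgenideal_def by blast
  have y: "y \<in> carrier R" using xy(2) ideal.Icarr[OF cgenideal_ideal[OF pi(1)]] by blast
  have "k \<otimes> c \<ominus> \<one> = \<ominus> y" using xy(3) k c y
    by (simp add: a_minus_def minus_add r_neg1 a_assoc[symmetric] r_neg)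
  then show ?thesis
    using k(1) additive_subgroup.a_inv_closed[OF ideal.axioms(1)[OF cgenideal_ideal[OF pi(1)]] xy(2)]
    by metis
qed

lemma primeideal_in_pair_ideal:
  assumes P: "primeideal P (poly_ring R)" and pi: "\<pi> \<in> carrier R" "\<pi> \<noteq> \<zero>"
    and contr: "contr R P = PIdl \<pi>"
  obtains f where "f \<in> carrier (poly_ring R)" "f = [] \<or> (lead_coeff f = \<one> \<and> degree f \<ge> 1)"
    "P \<subseteq> ring.pair_ideal (poly_ring R) (poly_of_const \<pi>) f"
proof (cases "\<forall>g\<in>P. set g \<subseteq> PIdl \<pi>")
  case True
  interpret UP: domain "poly_ring R" by (rule poly_ring_domain)
  interpret P: primeideal P "poly_ring R" by (rule P)
  have "g \<in> UP.pair_ideal (poly_of_const \<pi>) []" if g: "g \<in> P" for g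
  proof -
    obtain h where h: "h \<in> carrier (poly_ring R)" "g = poly_of_const \<pi> \<otimes>\<^bsub>poly_ring R\<^esub> h"
      using divisible_by_const[OF pi(1) P.Icarr[OF g]] True g by blast
    have "g = poly_of_const \<pi> \<otimes>\<^bsub>poly_ring R\<^esub> h
        \<oplus>\<^bsub>poly_ring R\<^esub> \<zero>\<^bsub>poly_ring R\<^esub> \<otimes>\<^bsub>poly_ring R\<^esub> \<zero>\<^bsub>poly_ring R\<^esub>"
      using h poly_of_const_closed[OF pi(1)] by simp
    then show ?thesis
      unfolding UP.pair_ideal_def univ_poly_zero using h(1) univ_poly_zero_closed by blast
  qed
  then show ?thesis using that[of "[]"] by blast
next
  case False
  interpret P: primeideal P "poly_ring R" by (rule P)
  have prime: "primeideal (PIdl \<pi>) R" using contr_primeideal[OF P] contr by simp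
  have proper: "\<one>\<^bsub>poly_ring R\<^esub> \<notin> P" using P.one_imp_carrier P.I_notcarr by metis
  have pi_P: "poly_of_const \<pi> \<in> P"
    using cgenideal_self[OF pi(1)] contr unfolding contr_def by blast
  obtain g0 where "g0 \<in> P" "\<not> set g0 \<subseteq> PIdl \<pi>" using False by blast
  then obtain f where "f \<in> P" "lead_coeff f = \<one>" "degree f \<ge> 1"
    "P \<subseteq> ring.pair_ideal (poly_ring R) (poly_of_const \<pi>) f"
    using monic_generator_mod_const[OF pi(1) invertible_mod_prime[OF pi prime] P.is_ideal
        proper pi_P] by blast
  then show ?thesis using that P.Icarr by blast
qed

lemma contr_ideal_pow_subset:
  assumes P: "primeideal P (poly_ring R)" and pi: "\<pi> \<in> carrier R" and contr: "contr R P = PIdl \<pi>"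
    and t: "t \<ge> 1"
  shows "contr R (ideal_pow (poly_ring R) P t) \<subseteq> PIdl (\<pi> [^] t)"
proof
  interpret UP: domain "poly_ring R" by (rule poly_ring_domain)
  interpret P: primeideal P "poly_ring R" by (rule P)
  fix a assume "a \<in> contr R (ideal_pow (poly_ring R) P t)"
  then have a: "a \<in> carrier R" "poly_of_const a \<in> ideal_pow (poly_ring R) P t"
    unfolding contr_def by auto
  show "a \<in> PIdl (\<pi> [^] t)"
  proof (cases "\<pi> = \<zero>")
    case True
    obtain n where "t = Suc n" using t by (cases t) auto
    then have "a \<in> contr R P" using a UP.ideal_pow_Suc_subset[OF P.is_ideal] unfolding contr_def by blast
    then show ?thesis using contr True \<open>t = Suc n\<close> by simp
  next
    case False
    obtain f where f: "f \<in> carrier (poly_ring R)" "f = [] \<or> (lead_coeff f = \<one> \<and> degree f \<ge> 1)"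
      and P_pair: "P \<subseteq> UP.pair_ideal (poly_of_const \<pi>) f"
      using primeideal_in_pair_ideal[OF P pi False contr] .
    have "ideal_pow (poly_ring R) P t \<subseteq> UP.pair_ideal (poly_of_const \<pi> [^]\<^bsub>poly_ring R\<^esub> t) f"
      by (rule UP.ideal_pow_subset_pair_ideal[OF poly_of_const_closed[OF pi] f(1) P_pair])
    then have "poly_of_const a \<in> UP.pair_ideal (poly_of_const (\<pi> [^] t)) f"
      using a(2) by (auto simp: ring_hom_ring.hom_nat_pow[OF poly_of_const_ring_hom pi])
    then show ?thesis using const_in_pair_ideal[OF a(1) _ f] pi by simp
  qed
qed

theorem primeideal_power_stable:
  assumes P: "primeideal P (poly_ring R)"
  shows "power_stable R P"
  unfolding power_stable_def
proof (intro allI impI)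
  fix t :: nat assume t: "t \<ge> 1"
  obtain \<pi> where pi: "\<pi> \<in> carrier R" and contr: "contr R P = PIdl \<pi>"
    using exists_gen[OF primeideal.axioms(1)[OF contr_primeideal[OF P]]] by blast
  have "ideal_pow R (contr R P) t = PIdl (\<pi> [^] t)" using ideal_pow_cgenideal[OF pi] contr by simp
  moreover have "\<pi> \<in> contr R P" using cgenideal_self[OF pi] contr by simp
  ultimately show "contr R (ideal_pow (poly_ring R) P t) = ideal_pow R (contr R P) t"
    using cgenideal_pow_subset_contr[OF primeideal.axioms(1)[OF P]]
      contr_ideal_pow_subset[OF P pi contr t] by blast
qed

end

theorem corollary3p4:
  fixes R :: "('a, 'b) ring_scheme" and P :: "'a list set"
  assumes "principal_domain R"
    and "primeideal P (poly_ring R)"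
  shows "power_stable R P"
  using principal_domain.primeideal_power_stable[OF assms] .

end
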